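(* Let $P\subseteq\mathbb{R}^n$ be an $n$-dimensional rational polytope and let $\pi_P:\mathbb{R}^n\to\mathbb{R}^n/K(P)$ be its natural projection. Then $Q:=\pi_P(P)$ is a rational polytope (with respect to the lattice $\mathbb{Z}^n/(K(P)\cap\mathbb{Z}^n)$) satisfying $\mu(Q)\ge\mu(P)$. Moreover, if $\mu(Q)=\mu(P)$, then $\mathrm{core}(Q)$ is the point $\pi_P(\mathrm{core}(P))$.
   Context: For a full-dimensional rational polytope $R$ in a real vector space with lattice $\Lambda$, write $R$ irredundantly as $\{x:\langle a_i,x\rangle\ge b_i\}$ with $a_i$ primitive in the dual lattice $\Lambda^*$, $b_i\in\mathbb{Q}$, each inequality defining a facet; set $d_R(x):=\min_i(\langle a_i,x\rangle-b_i)$, $R^{(s)}:=\{x:d_R(x)\ge s\}$, $\mu(R):=(\sup\{s>0:R^{(s)}\neq\emptyset\})^{-1}$ ($\mathbb{Q}$-codegree), $\mathrm{core}(R):=R^{(1/\mu(R))}$. For $P$ (with lattice $\mathbb{Z}^n$), $K(P)$ is the linear subspace parallel to the affine hull of $\mathrm{core}(P)$, and the natural projection is the quotient map $\pi_P:\mathbb{R}^n\to\mathbb{R}^n/K(P)$; $Q$ is considered with respect to the lattice $\mathbb{Z}^n/(K(P)\cap\mathbb{Z}^n)$. *)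

theory Defs
  imports "HOL-Analysis.Analysis"
begin

text \<open>Linear functionals are represented by vectors via the inner product, so the
  pairing \<open>\<langle>a,x\<rangle>\<close> is \<open>a \<bullet> x\<close>.\<close>

definition int_lattice :: "(real^'n) set" where
  "int_lattice = {x. \<forall>i. x $ i \<in> \<int>}"

definition dual_lattice :: "'a::euclidean_space set \<Rightarrow> 'a set" where
  "dual_lattice L = {a. \<forall>x\<in>L. a \<bullet> x \<in> \<int>}"

definition primitive_in :: "'a::euclidean_space set \<Rightarrow> 'a \<Rightarrow> bool" where
  "primitive_in M a \<longleftrightarrow> a \<in> M \<and> a \<noteq> 0 \<and>
     (\<forall>b\<in>M. \<forall>k::int. a = of_int k *\<^sub>R b \<longrightarrow> \<bar>k\<bar> = 1)"

text \<open>Rational polytope w.r.t. lattice L: convex hull of finitely many points of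
  \<open>L \<otimes> \<rat>\<close>.\<close>
definition rational_polytope :: "'a::euclidean_space set \<Rightarrow> 'a set \<Rightarrow> bool" where
  "rational_polytope L R \<longleftrightarrow>
     (\<exists>S. finite S \<and> R = convex hull S \<and> (\<forall>v\<in>S. \<exists>k::nat. k > 0 \<and> real k *\<^sub>R v \<in> L))"

definition is_facet :: "'a::euclidean_space set \<Rightarrow> 'a set \<Rightarrow> bool" where
  "is_facet F R \<longleftrightarrow> F face_of R \<and> aff_dim F = aff_dim R - 1"

definition facet_ineqs :: "'a::euclidean_space set \<Rightarrow> 'a set \<Rightarrow> ('a \<times> real) set" where
  "facet_ineqs L R = {(a, b). primitive_in (dual_lattice L) a \<and> (\<forall>x\<in>R. a \<bullet> x \<ge> b) \<and>
       is_facet {x\<in>R. a \<bullet> x = b} R}"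

definition lattice_dist :: "'a::euclidean_space set \<Rightarrow> 'a set \<Rightarrow> 'a \<Rightarrow> real" where
  "lattice_dist L R x = Min ((\<lambda>(a, b). a \<bullet> x - b) ` facet_ineqs L R)"

definition shrink :: "'a::euclidean_space set \<Rightarrow> 'a set \<Rightarrow> real \<Rightarrow> 'a set" where
  "shrink L R s = {x. lattice_dist L R x \<ge> s}"

definition qcodegree :: "'a::euclidean_space set \<Rightarrow> 'a set \<Rightarrow> real" where
  "qcodegree L R = inverse (Sup {s. s > 0 \<and> shrink L R s \<noteq> {}})"

definition core :: "'a::euclidean_space set \<Rightarrow> 'a set \<Rightarrow> 'a set" where
  "core L R = shrink L R (1 / qcodegree L R)"

definition core_dir :: "(real^'n) set \<Rightarrow> (real^'n) set" where
  "core_dir P = {x - y | x y. x \<in> affine hull (core int_lattice P) \<and> y \<in> affine hull (core int_lattice P)}"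

end

theory Submission
  imports Defs
begin

text \<open>Let \<open>s = 1/\<mu>(P)\<close> be the largest depth to which \<open>P\<close> can be shrunk, and let \<open>c\<close> be a point
  of the relative interior of \<open>core(P)\<close>. The facet inequalities whose slack at \<open>c\<close> is exactly \<open>s\<close>
  are tight on all of \<open>core(P)\<close>, so their normals vanish on \<open>K(P)\<close> and they descend to facet
  inequalities of \<open>Q = \<pi>(P)\<close> with primitive normals. A point of \<open>Q\<close> at depth \<open>t\<close> therefore lifts
  to a point whose slack in all tight inequalities is at least \<open>t\<close>; moving from \<open>c\<close> towards it
  shows \<open>t \<le> s\<close>, with equality only on the affine hull of \<open>core(P)\<close>, which \<open>\<pi>\<close> maps to a single
  point. Hence \<open>\<mu>(Q) \<ge> \<mu>(P)\<close>, and in case of equality \<open>core(Q)\<close> is that point; it is nonempty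
  because the tight inequalities cut out a bounded region of the quotient.\<close>

section \<open>Rational linear algebra\<close>

interpretation real_over_rat: vector_space "\<lambda>(q::rat) (x::real). of_rat q * x"
  by unfold_locales (auto simp: algebra_simps of_rat_add of_rat_mult)

lemma rat_linear_functional_exists:
  fixes c :: real
  assumes "c \<noteq> 0"
  obtains \<phi> :: "real \<Rightarrow> rat" where "\<phi> c = 1"
    "\<And>x y. \<phi> (x + y) = \<phi> x + \<phi> y" "\<And>q x. \<phi> (of_rat q * x) = q * \<phi> x"
proof -
  let ?B = "real_over_rat.extend_basis {c}"
  have indep: "real_over_rat.independent ?B"
    by (rule real_over_rat.independent_extend_basis) (simp add: assms)
  have spans: "\<And>x. x \<in> real_over_rat.span ?B"
    by (simp add: real_over_rat.independent_extend_basis assms)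
  have "c \<in> ?B" using real_over_rat.extend_basis_superset[of "{c}"] assms by auto
  then show ?thesis
    using that[of "\<lambda>x. real_over_rat.representation ?B x c"]
      real_over_rat.representation_basis[OF indep] real_over_rat.representation_add[OF indep spans spans]
      real_over_rat.representation_scale[OF indep spans]
    by auto
qed

lemma additive_sum:
  fixes \<phi> :: "'a::comm_monoid_add \<Rightarrow> 'b::ab_group_add"
  assumes "\<And>x y. \<phi> (x + y) = \<phi> x + \<phi> y"
  shows "\<phi> (sum f A) = (\<Sum>i\<in>A. \<phi> (f i))"
proof -
  have "\<phi> 0 = 0" using assms[of 0 0] by (metis add.right_neutral add_left_cancel)
  then show ?thesis by (induction A rule: infinite_finite_induct) (auto simp: assms)
qed

text \<open>Apply a \<open>\<rat>\<close>-linear functional \<open>\<phi> : \<real> \<rightarrow> \<rat>\<close> with \<open>\<phi> (a $ k) = 1\<close> to every coordinate of \<open>a\<close>.\<close>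
lemma rational_orthogonal_vector:
  fixes a :: "real^'n"
  assumes "a \<noteq> 0" and rat: "\<And>d i. d \<in> D \<Longrightarrow> d $ i \<in> \<rat>"
    and orth: "\<And>d. d \<in> D \<Longrightarrow> a \<bullet> d = 0"
  obtains u where "u \<noteq> 0" "\<And>i. u $ i \<in> \<rat>" "\<And>d. d \<in> D \<Longrightarrow> u \<bullet> d = 0"
proof -
  obtain k where k: "a $ k \<noteq> 0" using assms(1) by (metis vec_eq_iff zero_index)
  obtain \<phi> :: "real \<Rightarrow> rat" where \<phi>1: "\<phi> (a $ k) = 1"
    and \<phi>add: "\<And>x y. \<phi> (x + y) = \<phi> x + \<phi> y" and \<phi>scale: "\<And>q x. \<phi> (of_rat q * x) = q * \<phi> x"
    using rat_linear_functional_exists[OF k] by blast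
  define u :: "real^'n" where "u = (\<chi> i. of_rat (\<phi> (a $ i)))"
  show ?thesis
  proof (rule that[of u])
    show "u \<noteq> 0" using \<phi>1 by (metis u_def vec_lambda_beta zero_index of_rat_1 one_neq_zero)
    show "u $ i \<in> \<rat>" for i by (simp add: u_def)
    fix d assume d: "d \<in> D"
    have "\<forall>i. \<exists>q. d $ i = of_rat q" using rat[OF d] by (metis Rats_cases)
    then obtain q where q: "\<And>i. d $ i = of_rat (q i)" by metis
    have "0 = \<phi> (a \<bullet> d)" using orth[OF d] \<phi>add[of 0 0] by simp
    also have "a \<bullet> d = (\<Sum>i\<in>UNIV. of_rat (q i) * a $ i)"
      by (simp add: inner_vec_def q mult.commute)
    also have "\<phi> \<dots> = (\<Sum>i\<in>UNIV. q i * \<phi> (a $ i))"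
      by (simp add: additive_sum[OF \<phi>add] \<phi>scale)
    finally have "of_rat (\<Sum>i\<in>UNIV. q i * \<phi> (a $ i)) = (0::real)" by simp
    then show "u \<bullet> d = 0"
      by (simp add: inner_vec_def u_def q of_rat_sum of_rat_mult mult.commute)
  qed
qed

lemma rational_vector_multiple_in_int_lattice:
  fixes u :: "real^'n"
  assumes "\<And>i. u $ i \<in> \<rat>"
  obtains N :: nat where "N > 0" "N *\<^sub>R u \<in> int_lattice"
proof -
  have "\<exists>n::nat. n > 0 \<and> real n * u $ i \<in> \<int>" for i
  proof -
    obtain r where r: "u $ i = of_rat r" using assms[of i] by (metis Rats_cases)
    obtain p q where pq: "quotient_of r = (p, q)" by (cases "quotient_of r")
    have "q > 0" using quotient_of_denom_pos[OF pq] .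
    moreover have "real (nat q) * u $ i = of_int p"
      using calculation quotient_of_div[OF pq] by (simp add: r of_rat_divide)
    ultimately show ?thesis by (intro exI[of _ "nat q"]) auto
  qed
  then obtain n where n: "\<And>i. n i > (0::nat)" "\<And>i. real (n i) * u $ i \<in> \<int>" by metis
  define N where "N = (\<Prod>i\<in>UNIV. n i)"
  have "(N *\<^sub>R u) $ i \<in> \<int>" for i
  proof -
    have "N = n i * (\<Prod>j\<in>UNIV - {i}. n j)" unfolding N_def by (simp add: prod.remove)
    then have "(N *\<^sub>R u) $ i = real (\<Prod>j\<in>UNIV - {i}. n j) * (real (n i) * u $ i)" by simp
    then show ?thesis using n(2)[of i] by (metis Ints_mult Ints_of_nat)
  qed
  moreover have "N > 0" using n(1) by (simp add: N_def)
  ultimately show ?thesis using that by (auto simp: int_lattice_def)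
qed

lemma int_lattice_subset_dual: "(int_lattice :: (real^'n) set) \<subseteq> dual_lattice int_lattice"
  unfolding dual_lattice_def int_lattice_def by (auto simp: inner_vec_def intro!: Ints_mult)

lemma span_int_lattice: "span (int_lattice :: (real^'n) set) = UNIV"
proof -
  have "Basis \<subseteq> (int_lattice :: (real^'n) set)"
    by (auto simp: int_lattice_def Basis_vec_def axis_def)
  then show ?thesis by (metis span_Basis span_mono top.extremum_uniqueI)
qed

lemma spanning_set_detects_nonzero:
  fixes u :: "'a::euclidean_space"
  assumes "span L = UNIV" "u \<noteq> 0"
  obtains l where "l \<in> L" "u \<bullet> l \<noteq> 0"
proof -
  have False if "\<And>l. l \<in> L \<Longrightarrow> u \<bullet> l = 0"
    using orthogonal_to_span[of u L u] that assms by (simp add: orthogonal_def)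
  then show ?thesis using that by blast
qed

section \<open>Primitive facet inequalities\<close>

lemma hyperplane_eq_imp_proportional:
  fixes a a' :: "'a::euclidean_space"
  assumes "a \<noteq> 0" "{x. a \<bullet> x = b} = {x. a' \<bullet> x = b'}"
  obtains t where "a' = t *\<^sub>R a" "b' = t * b"
proof -
  have aa: "a \<bullet> a \<noteq> 0" using assms by simp
  define x0 where "x0 = (b / (a \<bullet> a)) *\<^sub>R a"
  define t where "t = (a' \<bullet> a) / (a \<bullet> a)"
  define w where "w = a' - t *\<^sub>R a"
  have x0: "a \<bullet> x0 = b" using aa by (simp add: x0_def)
  have aw: "a \<bullet> w = 0" using aa by (simp add: w_def t_def inner_diff_right inner_commute)
  have "a \<bullet> (x0 + w) = b" using x0 aw by (simp add: inner_add_right)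
  then have "a' \<bullet> (x0 + w) = b'" using assms(2) by blast
  moreover have a'x0: "a' \<bullet> x0 = b'" using x0 assms(2) by blast
  ultimately have "a' \<bullet> w = 0" by (simp add: inner_add_right)
  then have "w \<bullet> w = 0" using aw by (simp add: w_def inner_diff_left inner_commute)
  then have a': "a' = t *\<^sub>R a" by (simp add: w_def)
  moreover have "b' = t * b" using a'x0 x0 by (simp add: a')
  ultimately show ?thesis by (rule that)
qed

lemma affine_hull_eq_hyperplane:
  fixes G :: "'a::euclidean_space set"
  assumes "a \<noteq> 0" "G \<subseteq> {x. a \<bullet> x = b}" "aff_dim G = int DIM('a) - 1"
  shows "affine hull G = {x. a \<bullet> x = b}"
proof (rule affine_dim_equal)
  have "G \<noteq> {}"
  proof
    assume "G = {}"
    with assms(3) DIM_positive[where 'a='a] show False by simp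
  qed
  then show "affine hull G \<noteq> {}" by simp
  show "affine hull G \<subseteq> {x. a \<bullet> x = b}"
    by (rule hull_minimal[OF assms(2)]) (simp add: affine_hyperplane)
  show "aff_dim (affine hull G) = aff_dim {x. a \<bullet> x = b}" using assms by simp
qed (auto simp: affine_hyperplane)

lemma facet_inequalities_proportional:
  fixes R :: "'a::euclidean_space set"
  assumes full: "aff_dim R = int DIM('a)"
    and valid: "\<forall>x\<in>R. a \<bullet> x \<ge> b" "\<forall>x\<in>R. a' \<bullet> x \<ge> b'"
    and eq: "{x\<in>R. a \<bullet> x = b} = {x\<in>R. a' \<bullet> x = b'}"
    and dim: "aff_dim {x\<in>R. a \<bullet> x = b} = aff_dim R - 1"
  obtains t where "t > 0" "a' = t *\<^sub>R a" "b' = t * b"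
proof -
  let ?G = "{x\<in>R. a \<bullet> x = b}"
  have proper: "?G \<noteq> R" using dim by (metis add.commute diff_add_cancel less_add_one less_irrefl)
  have "?G \<noteq> {}"
  proof
    assume "?G = {}"
    with dim full DIM_positive[where 'a='a] show False by simp
  qed
  have trivial_if_zero: "{x\<in>R. c \<bullet> x = d} = {} \<or> {x\<in>R. c \<bullet> x = d} = R" if "c = 0" for c d
    using that by auto
  have nonzero: "a \<noteq> 0" "a' \<noteq> 0"
    using trivial_if_zero[of a b] trivial_if_zero[of a' b'] \<open>?G \<noteq> {}\<close> proper
    unfolding eq by blast+
  have dimG: "aff_dim ?G = int DIM('a) - 1" using dim full by simp
  have "affine hull ?G = {x. a \<bullet> x = b}"
    by (rule affine_hull_eq_hyperplane[OF nonzero(1) _ dimG]) blast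
  moreover have "affine hull ?G = {x. a' \<bullet> x = b'}"
    by (rule affine_hull_eq_hyperplane[OF nonzero(2) _ dimG]) (use eq in blast)
  ultimately obtain t where t: "a' = t *\<^sub>R a" "b' = t * b"
    using hyperplane_eq_imp_proportional[OF nonzero(1)] by metis
  obtain z where z: "z \<in> R" "a \<bullet> z \<noteq> b" using proper by blast
  moreover have "b \<le> a \<bullet> z" using valid(1) z(1) by blast
  ultimately have "a \<bullet> z > b" by simp
  moreover have "t * (a \<bullet> z - b) \<ge> 0" using valid(2) z(1) t by (simp add: algebra_simps)
  ultimately have "t \<ge> 0" by (simp add: zero_le_mult_iff)
  moreover have "t \<noteq> 0" using nonzero(2) t by auto
  ultimately have "t > 0" by simp
  with t that show ?thesis by blast
qed

lemma dual_lattice_add: "a \<in> dual_lattice L \<Longrightarrow> b \<in> dual_lattice L \<Longrightarrow> a + b \<in> dual_lattice L"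
  by (auto simp: dual_lattice_def inner_add_left)

lemma dual_lattice_uminus: "a \<in> dual_lattice L \<Longrightarrow> - a \<in> dual_lattice L"
  by (auto simp: dual_lattice_def)

lemma dual_lattice_scale_int: "a \<in> dual_lattice L \<Longrightarrow> of_int k *\<^sub>R a \<in> dual_lattice L"
  by (auto simp: dual_lattice_def)

lemma primitive_in_dual_lattice_if_minimal:
  assumes g: "g \<in> dual_lattice L" "g \<noteq> 0"
    and minimal: "\<And>t. 0 < t \<Longrightarrow> t *\<^sub>R g \<in> dual_lattice L \<Longrightarrow> 1 \<le> t"
  shows "primitive_in (dual_lattice L) g"
  unfolding primitive_in_def
proof (intro conjI ballI allI impI g)
  fix b k assume b: "b \<in> dual_lattice L" and gk: "g = of_int (k::int) *\<^sub>R b"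
  then have "k \<noteq> 0" using g(2) by auto
  have "(1 / \<bar>of_int k\<bar>) *\<^sub>R g = of_int (sgn k) *\<^sub>R b"
    using \<open>k \<noteq> 0\<close> by (simp add: gk sgn_if)
  also have "\<dots> \<in> dual_lattice L" using b by (rule dual_lattice_scale_int)
  finally have "1 \<le> 1 / \<bar>real_of_int k\<bar>" using \<open>k \<noteq> 0\<close> by (intro minimal) auto
  then show "\<bar>k\<bar> = 1" using \<open>k \<noteq> 0\<close> by (simp add: le_divide_eq)
qed

text \<open>The primitive multiple is the positive multiple of \<open>v\<close> with the least (integral) value on \<open>l\<close>.\<close>
lemma primitive_positive_multiple_exists:
  assumes v: "v \<in> dual_lattice L" and l: "l \<in> L" and nz: "v \<bullet> l \<noteq> 0"
  obtains c where "c > 0" "primitive_in (dual_lattice L) (c *\<^sub>R v)"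
proof -
  define \<beta> where "\<beta> = \<bar>v \<bullet> l\<bar>"
  have "\<beta> > 0" using nz by (simp add: \<beta>_def)
  have nat_value: "\<exists>p::nat. t * \<beta> = real p"
    if t: "t \<ge> 0" "t *\<^sub>R v \<in> dual_lattice L" for t
  proof -
    obtain m :: int where "t * (v \<bullet> l) = of_int m"
      using t(2) l by (auto simp: dual_lattice_def elim!: Ints_cases)
    then have "t * \<beta> = \<bar>of_int m\<bar>" using t(1) by (metis \<beta>_def abs_mult abs_of_nonneg)
    then have "t * \<beta> = real (nat \<bar>m\<bar>)" by simp
    then show ?thesis by blast
  qed
  let ?S = "{p::nat. p > 0 \<and> (\<exists>t>0. t *\<^sub>R v \<in> dual_lattice L \<and> t * \<beta> = real p)}"
  obtain p where "1 * \<beta> = real p" using nat_value[of 1] v by auto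
  then have "p \<in> ?S" using v nz by (auto simp: \<beta>_def intro!: exI[of _ 1])
  define p0 where "p0 = (LEAST p. p \<in> ?S)"
  have "p0 \<in> ?S" unfolding p0_def by (rule LeastI) fact
  then obtain t0 where t0: "t0 > 0" "t0 *\<^sub>R v \<in> dual_lattice L" "t0 * \<beta> = real p0" and "p0 > 0"
    by blast
  have "primitive_in (dual_lattice L) (t0 *\<^sub>R v)"
  proof (rule primitive_in_dual_lattice_if_minimal[OF t0(2)])
    show "t0 *\<^sub>R v \<noteq> 0" using t0(1) nz by auto
    fix s assume "0 < s" "s *\<^sub>R t0 *\<^sub>R v \<in> dual_lattice L"
    moreover obtain p where p: "(s * t0) * \<beta> = real p"
      using nat_value[of "s * t0"] calculation t0(1) by auto
    moreover have "real p > 0" using p \<open>0 < s\<close> t0(1) \<open>\<beta> > 0\<close> by (metis mult_pos_pos)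
    ultimately have "p \<in> ?S" using t0(1) by (auto intro!: exI[of _ "s * t0"])
    then have "p0 \<le> p" unfolding p0_def by (rule Least_le)
    then have "real p0 \<le> s * real p0" using p t0(3) by (simp add: mult.assoc)
    then show "1 \<le> s" using \<open>p0 > 0\<close> by simp
  qed
  with t0(1) show ?thesis by (rule that)
qed

text \<open>Two primitive positive multiples of \<open>u\<close> take values \<open>p, p'\<close> on \<open>l\<close>; the multiple taking
  the value \<open>gcd p p'\<close> lies in the dual lattice by Bezout, so primitivity forces \<open>p = p'\<close>.\<close>
lemma primitive_positive_multiple_unique:
  assumes l: "l \<in> L" and nz: "u \<bullet> l \<noteq> 0" and t: "t > 0" "t' > 0"
    and prim: "primitive_in (dual_lattice L) (t *\<^sub>R u)" "primitive_in (dual_lattice L) (t' *\<^sub>R u)"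
  shows "t = t'"
proof -
  have "(t *\<^sub>R u) \<bullet> l \<in> \<int>" "(t' *\<^sub>R u) \<bullet> l \<in> \<int>"
    using prim l by (auto simp: primitive_in_def dual_lattice_def)
  then obtain p p' :: int where p: "t * (u \<bullet> l) = of_int p" and p': "t' * (u \<bullet> l) = of_int p'"
    by (metis Ints_cases inner_scaleR_left)
  define g where "g = gcd p p'"
  obtain x y where xy: "x * p + y * p' = g" unfolding g_def using bezout_int by metis
  have "p \<noteq> 0" using p t nz by (metis mult_eq_0_iff of_int_0 less_irrefl)
  then have gpos: "g > 0" by (simp add: g_def)
  define w where "w = (of_int g / (u \<bullet> l)) *\<^sub>R u"
  have "of_int g = of_int x * (t * (u \<bullet> l)) + of_int y * (t' * (u \<bullet> l))"
    using xy p p' by (metis of_int_add of_int_mult)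
  then have "of_int g / (u \<bullet> l) = of_int x * t + of_int y * t'" using nz by (simp add: field_simps)
  then have "w = of_int x *\<^sub>R (t *\<^sub>R u) + of_int y *\<^sub>R (t' *\<^sub>R u)"
    by (simp add: w_def scaleR_add_left)
  then have wD: "w \<in> dual_lattice L"
    using prim by (metis dual_lattice_add dual_lattice_scale_int primitive_in_def)
  have abs_eq_gcd: "\<bar>q\<bar> = g"
    if "s * (u \<bullet> l) = of_int q" "primitive_in (dual_lattice L) (s *\<^sub>R u)" "g dvd q" for s q
  proof -
    from that(3) obtain r where r: "q = g * r" by (auto simp: dvd_def)
    have "s *\<^sub>R u = of_int r *\<^sub>R w" using nz gpos that(1) r by (simp add: w_def field_simps)
    then have "\<bar>r\<bar> = 1" using that(2) wD unfolding primitive_in_def by blast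
    then show ?thesis using r gpos by (simp add: abs_mult)
  qed
  have "\<bar>p\<bar> = \<bar>p'\<bar>" using abs_eq_gcd[OF p prim(1)] abs_eq_gcd[OF p' prim(2)] by (simp add: g_def)
  moreover have "p > 0 \<longleftrightarrow> p' > 0"
  proof -
    have "real_of_int p > 0 \<longleftrightarrow> u \<bullet> l > 0" "real_of_int p' > 0 \<longleftrightarrow> u \<bullet> l > 0"
      unfolding p[symmetric] p'[symmetric] using t by (simp_all add: zero_less_mult_iff)
    then show ?thesis by simp
  qed
  ultimately have "p = p'" by (metis abs_of_pos abs_of_nonpos not_less minus_equation_iff)
  then show ?thesis using p p' nz by (metis mult_right_cancel)
qed

lemma finite_facet_ineqs:
  fixes R :: "'a::euclidean_space set"
  assumes poly: "polytope R" and full: "aff_dim R = int DIM('a)" and span: "span L = UNIV"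
  shows "finite (facet_ineqs L R)"
proof -
  let ?face = "\<lambda>(a,b). {x\<in>R. a \<bullet> x = b}"
  have "?face ` facet_ineqs L R \<subseteq> {F. F face_of R}"
    by (auto simp: facet_ineqs_def is_facet_def)
  then have "finite (?face ` facet_ineqs L R)"
    using finite_polytope_faces[OF poly] finite_subset by blast
  moreover have "inj_on ?face (facet_ineqs L R)"
  proof (rule inj_onI, clarify)
    fix a b a' b'
    assume ab: "(a,b) \<in> facet_ineqs L R" "(a',b') \<in> facet_ineqs L R"
      and eq: "{x\<in>R. a \<bullet> x = b} = {x\<in>R. a' \<bullet> x = b'}"
    then have prim: "primitive_in (dual_lattice L) a" "primitive_in (dual_lattice L) a'"
      by (auto simp: facet_ineqs_def)
    obtain t where t: "t > 0" "a' = t *\<^sub>R a" "b' = t * b"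
      using facet_inequalities_proportional[OF full _ _ eq] ab by (auto simp: facet_ineqs_def is_facet_def)
    obtain l where "l \<in> L" "a \<bullet> l \<noteq> 0"
      using spanning_set_detects_nonzero[OF span] prim(1) by (auto simp: primitive_in_def)
    then have "1 = t"
      by (rule primitive_positive_multiple_unique) (use prim t in auto)
    then show "a = a' \<and> b = b'" using t by simp
  qed
  ultimately show ?thesis using finite_imageD by blast
qed

lemma rational_polytope_int_latticeE:
  fixes P :: "(real^'n) set"
  assumes "rational_polytope int_lattice P"
  obtains S where "finite S" "P = convex hull S" "\<And>v i. v \<in> S \<Longrightarrow> v $ i \<in> \<rat>"
proof -
  obtain S where S: "finite S" "P = convex hull S"
    and mult: "\<And>v. v \<in> S \<Longrightarrow> \<exists>k::nat. k > 0 \<and> real k *\<^sub>R v \<in> int_lattice"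
    using assms unfolding rational_polytope_def by blast
  have "v $ i \<in> \<rat>" if v: "v \<in> S" for v i
  proof -
    obtain k :: nat where k: "k > 0" "real k *\<^sub>R v \<in> int_lattice" using mult[OF v] by blast
    then have "real k * v $ i \<in> \<rat>" using Ints_subset_Rats by (auto simp: int_lattice_def)
    then have "(real k * v $ i) / real k \<in> \<rat>" by (rule Rats_divide) simp
    then show ?thesis using k(1) by simp
  qed
  with S show ?thesis by (rule that)
qed

lemma facet_subset_rational_hyperplane:
  fixes P :: "(real^'n) set"
  assumes S: "finite S" "P = convex hull S" "\<And>v i. v \<in> S \<Longrightarrow> v $ i \<in> \<rat>"
    and G: "G facet_of P" and a: "a \<noteq> 0" "G \<subseteq> {x. a \<bullet> x = b}"
  obtains u d where "u \<noteq> 0" "\<And>i. u $ i \<in> \<rat>" "G \<subseteq> {x. u \<bullet> x = d}"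
proof -
  obtain T where T: "T \<subseteq> S" "G = convex hull T"
    using face_of_convex_hull_subset[OF finite_imp_compact[OF S(1)]] G S(2) facet_of_imp_face_of
    by metis
  have "T \<noteq> {}" using G T(2) by (auto simp: facet_of_def)
  then obtain p0 where p0: "p0 \<in> T" by blast
  have T_G: "T \<subseteq> G" unfolding T(2) by (rule hull_subset)
  let ?D = "(\<lambda>s. s - p0) ` T"
  have "d $ i \<in> \<rat>" if d: "d \<in> ?D" for d i
  proof -
    obtain s where "s \<in> T" "d = s - p0" using d by blast
    then show ?thesis using S(3) T(1) p0 by (auto intro: Rats_diff)
  qed
  moreover have "a \<bullet> d = 0" if d: "d \<in> ?D" for d
  proof -
    obtain s where s: "s \<in> T" "d = s - p0" using d by blast
    have "a \<bullet> s = b" "a \<bullet> p0 = b" using s(1) p0 T_G a(2) by auto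
    then show ?thesis using s(2) by (simp add: inner_diff_right)
  qed
  ultimately obtain u where u: "u \<noteq> 0" "\<And>i. u $ i \<in> \<rat>" "\<And>d. d \<in> ?D \<Longrightarrow> u \<bullet> d = 0"
    using rational_orthogonal_vector[OF a(1)] by metis
  have "T \<subseteq> {x. u \<bullet> x = u \<bullet> p0}"
    using u(3) by (force simp: inner_diff_right)
  then have "G \<subseteq> {x. u \<bullet> x = u \<bullet> p0}"
    unfolding T(2) by (rule hull_minimal) (rule convex_hyperplane)
  with u show ?thesis using that by blast
qed

lemma facet_ineqs_intro:
  assumes "primitive_in (dual_lattice L) a" "\<forall>x\<in>R. a \<bullet> x \<ge> b"
    and "{x\<in>R. a \<bullet> x = b} facet_of R"
  shows "(a, b) \<in> facet_ineqs L R"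
  using assms by (auto simp: facet_ineqs_def is_facet_def facet_of_def)

lemma primitive_positive_multiple_rational_direction:
  fixes a u :: "real^'n"
  assumes a: "a = t *\<^sub>R u" "a \<noteq> 0" and u: "\<And>i. u $ i \<in> \<rat>"
  obtains c where "c > 0" "primitive_in (dual_lattice int_lattice) (c *\<^sub>R a)"
proof -
  obtain N :: nat where N: "N > 0" "N *\<^sub>R u \<in> int_lattice"
    using rational_vector_multiple_in_int_lattice[OF u] by blast
  define w where "w = (real N / \<bar>t\<bar>) *\<^sub>R a"
  have "t \<noteq> 0" using a by auto
  then have "w = (if t > 0 then N *\<^sub>R u else - (N *\<^sub>R u))" by (simp add: w_def a(1))
  then have "w \<in> dual_lattice int_lattice"
    using int_lattice_subset_dual N(2) dual_lattice_uminus by auto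
  moreover obtain l where "l \<in> int_lattice" "w \<bullet> l \<noteq> 0"
    using spanning_set_detects_nonzero[OF span_int_lattice, of w] N(1) \<open>t \<noteq> 0\<close> a(2)
    by (auto simp: w_def)
  ultimately obtain c where "c > 0" "primitive_in (dual_lattice int_lattice) (c *\<^sub>R w)"
    by (rule primitive_positive_multiple_exists)
  then show ?thesis
    using that[of "c * (real N / \<bar>t\<bar>)"] N(1) \<open>t \<noteq> 0\<close> by (simp add: w_def)
qed

lemma facet_of_rational_polytope_facet_ineq:
  fixes P :: "(real^'n) set"
  assumes rational: "rational_polytope int_lattice P" and full: "aff_dim P = int CARD('n)"
    and G: "G facet_of P"
  obtains a b where "(a, b) \<in> facet_ineqs int_lattice P" "{x\<in>P. a \<bullet> x = b} = G"
proof -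
  obtain S where S: "finite S" "P = convex hull S" "\<And>v i. v \<in> S \<Longrightarrow> v $ i \<in> \<rat>"
    using rational_polytope_int_latticeE[OF rational] by blast
  have "polytope P" using S unfolding polytope_def by blast
  then have "polyhedron P" by (rule polytope_imp_polyhedron)
  then obtain a0 b0 where a0: "a0 \<noteq> 0" "P \<subseteq> {x. a0 \<bullet> x \<le> b0}" "G = P \<inter> {x. a0 \<bullet> x = b0}"
    using facet_of_polyhedron[OF _ G] by blast
  obtain u d where u: "u \<noteq> 0" "\<And>i. u $ i \<in> \<rat>" "G \<subseteq> {x. u \<bullet> x = d}"
    using facet_subset_rational_hyperplane[OF S G a0(1)] a0(3) by blast
  have dimG: "aff_dim G = int CARD('n) - 1" using G full by (simp add: facet_of_def)
  have "affine hull G = {x. u \<bullet> x = d}"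
    using affine_hull_eq_hyperplane[OF u(1) u(3)] dimG by simp
  moreover have "affine hull G = {x. a0 \<bullet> x = b0}"
    by (rule affine_hull_eq_hyperplane[OF a0(1)]) (use a0(3) dimG in auto)
  ultimately obtain t where t: "a0 = t *\<^sub>R u" "b0 = t * d"
    using hyperplane_eq_imp_proportional[OF u(1)] by metis
  obtain c where c: "c > 0" "primitive_in (dual_lattice int_lattice) (c *\<^sub>R - a0)"
    using primitive_positive_multiple_rational_direction[of "- a0" "- t" u] t(1) a0(1) u(2) by auto
  define \<kappa> where "\<kappa> = - c"
  have \<kappa>: "\<kappa> < 0" using c(1) by (simp add: \<kappa>_def)
  have Geq: "{x\<in>P. (\<kappa> *\<^sub>R a0) \<bullet> x = \<kappa> * b0} = G" using a0(3) \<kappa> by force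
  have "(\<kappa> *\<^sub>R a0, \<kappa> * b0) \<in> facet_ineqs int_lattice P"
  proof (rule facet_ineqs_intro)
    show "primitive_in (dual_lattice int_lattice) (\<kappa> *\<^sub>R a0)" using c(2) by (simp add: \<kappa>_def)
    show "\<forall>x\<in>P. (\<kappa> *\<^sub>R a0) \<bullet> x \<ge> \<kappa> * b0"
      using a0(2) \<kappa> by (auto simp: mult_le_cancel_left_neg)
    show "{x\<in>P. (\<kappa> *\<^sub>R a0) \<bullet> x = \<kappa> * b0} facet_of P" using Geq G by simp
  qed
  with Geq that show ?thesis by blast
qed

lemma facet_inequality_positive_multiple:
  fixes P :: "(real^'n) set"
  assumes rational: "rational_polytope int_lattice P" and full: "aff_dim P = int CARD('n)"
    and valid: "\<forall>x\<in>P. a \<bullet> x \<ge> b" and facet: "(P \<inter> {x. a \<bullet> x = b}) facet_of P"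
  obtains t where "t > 0" "(t *\<^sub>R a, t * b) \<in> facet_ineqs int_lattice P"
proof -
  obtain a' b' where ab': "(a', b') \<in> facet_ineqs int_lattice P"
    and eq: "{x\<in>P. a' \<bullet> x = b'} = P \<inter> {x. a \<bullet> x = b}"
    by (rule facet_of_rational_polytope_facet_ineq[OF rational full facet])
  have full': "aff_dim P = int DIM(real^'n)" using full by simp
  have "\<forall>y\<in>P. a' \<bullet> y \<ge> b'" using ab' by (auto simp: facet_ineqs_def)
  moreover have "{y\<in>P. a \<bullet> y = b} = {y\<in>P. a' \<bullet> y = b'}" using eq by auto
  moreover have "aff_dim {y\<in>P. a \<bullet> y = b} = aff_dim P - 1"
    using facet by (simp add: facet_of_def Int_def conj_commute)
  ultimately obtain t where "t > 0" "a' = t *\<^sub>R a" "b' = t * b"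
    by (rule facet_inequalities_proportional[OF full' valid])
  with ab' that show ?thesis by blast
qed

lemma rational_polytope_eq_facet_halfspaces:
  fixes P :: "(real^'n) set"
  assumes rational: "rational_polytope int_lattice P" and full: "aff_dim P = int CARD('n)"
  shows "P = {x. \<forall>(a,b)\<in>facet_ineqs int_lattice P. a \<bullet> x \<ge> b}"
proof
  show "P \<subseteq> {x. \<forall>(a,b)\<in>facet_ineqs int_lattice P. a \<bullet> x \<ge> b}"
    by (auto simp: facet_ineqs_def)
  obtain S where "finite S" "P = convex hull S"
    using rational_polytope_int_latticeE[OF rational] by blast
  then have "polytope P" unfolding polytope_def by blast
  then have "polyhedron P" by (rule polytope_imp_polyhedron)
  then obtain F where F: "finite F" and P_eq: "P = affine hull P \<inter> \<Inter>F"
    and halfspaces: "\<And>h. h \<in> F \<Longrightarrow> \<exists>a b. a \<noteq> 0 \<and> h = {x. a \<bullet> x \<le> b}"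
    and minimal: "\<And>F'. F' \<subset> F \<Longrightarrow> P \<subset> (affine hull P) \<inter> \<Inter>F'"
    by (simp add: polyhedron_Int_affine_minimal) meson
  then obtain a b where ab: "\<And>h. h \<in> F \<Longrightarrow> a h \<noteq> 0 \<and> h = {x. a h \<bullet> x \<le> b h}"
    by metis
  have "affine hull P = UNIV" using full aff_dim_eq_full[of P] by simp
  show "{x. \<forall>(a,b)\<in>facet_ineqs int_lattice P. a \<bullet> x \<ge> b} \<subseteq> P"
  proof (rule subsetI, rule ccontr)
    fix x assume x: "x \<in> {x. \<forall>(a,b)\<in>facet_ineqs int_lattice P. a \<bullet> x \<ge> b}" and "x \<notin> P"
    then obtain h where h: "h \<in> F" "x \<notin> h" using P_eq \<open>affine hull P = UNIV\<close> by auto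
    have "P \<subseteq> {y. a h \<bullet> y \<le> b h}" using P_eq h(1) ab[OF h(1)] by blast
    then have "\<forall>y\<in>P. (- a h) \<bullet> y \<ge> - b h" by auto
    moreover have "(P \<inter> {y. a h \<bullet> y = b h}) facet_of P"
      using facet_of_polyhedron_explicit[OF F P_eq ab minimal] h(1) by blast
    then have "(P \<inter> {y. (- a h) \<bullet> y = - b h}) facet_of P" by simp
    ultimately obtain t where "t > 0" "(t *\<^sub>R - a h, t * - b h) \<in> facet_ineqs int_lattice P"
      by (rule facet_inequality_positive_multiple[OF rational full])
    moreover from this(2) have "t * - b h \<le> (t *\<^sub>R - a h) \<bullet> x" using x by blast
    moreover have "a h \<bullet> x > b h" using h ab by force
    ultimately show False by (simp add: mult_less_cancel_left_pos)
  qed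
qed

section \<open>Depth\<close>

definition admissible_depths :: "'a::euclidean_space set \<Rightarrow> 'a set \<Rightarrow> real set" where
  "admissible_depths L R = {s. s > 0 \<and> shrink L R s \<noteq> {}}"

definition max_depth :: "'a::euclidean_space set \<Rightarrow> 'a set \<Rightarrow> real" where
  "max_depth L R = Sup (admissible_depths L R)"

lemma qcodegree_eq_inverse_max_depth: "qcodegree L R = inverse (max_depth L R)"
  by (simp add: qcodegree_def max_depth_def admissible_depths_def)

lemma core_eq_shrink_max_depth: "core L R = shrink L R (max_depth L R)"
  by (simp add: core_def qcodegree_eq_inverse_max_depth divide_inverse)

lemma shrink_eq_facet_slacks:
  assumes "finite (facet_ineqs L R)" "facet_ineqs L R \<noteq> {}"
  shows "shrink L R s = {x. \<forall>(a,b)\<in>facet_ineqs L R. s \<le> a \<bullet> x - b}"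
  using assms by (auto simp: shrink_def lattice_dist_def Min_ge_iff)

lemma facet_slack_pos_interior:
  assumes "(a,b) \<in> facet_ineqs L R" and y: "y \<in> interior R"
  shows "a \<bullet> y > b"
proof (rule ccontr)
  have face: "{x\<in>R. a \<bullet> x = b} face_of R" and dim: "aff_dim {x\<in>R. a \<bullet> x = b} = aff_dim R - 1"
    and valid: "\<forall>x\<in>R. a \<bullet> x \<ge> b"
    using assms(1) by (auto simp: facet_ineqs_def is_facet_def)
  assume "\<not> a \<bullet> y > b"
  then have "y \<in> {x\<in>R. a \<bullet> x = b} \<inter> interior R"
    using y valid interior_subset[of R] by force
  then have "{x\<in>R. a \<bullet> x = b} = R" using face_of_disjoint_interior[OF face] by blast
  with dim show False by simp
qed

lemma lattice_dist_interior_admissible: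
  assumes "finite (facet_ineqs L R)" "facet_ineqs L R \<noteq> {}" and y: "y \<in> interior R"
  shows "lattice_dist L R y \<in> admissible_depths L R"
proof -
  have "lattice_dist L R y > 0"
    using assms facet_slack_pos_interior[OF _ y] by (auto simp: lattice_dist_def Min_gr_iff)
  then show ?thesis by (auto simp: admissible_depths_def shrink_def)
qed

text \<open>The sets \<open>shrink L R s\<close> decrease in \<open>s\<close>, so by compactness of \<open>K\<close> they have a common point.\<close>
lemma shrink_max_depth_nonempty:
  assumes fin: "finite (facet_ineqs L R)" "facet_ineqs L R \<noteq> {}"
    and K: "compact K" and nonempty: "admissible_depths L R \<noteq> {}"
    and bdd: "bdd_above (admissible_depths L R)"
    and in_K: "\<And>s. s \<in> admissible_depths L R \<Longrightarrow> shrink L R s \<subseteq> K"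
  shows "shrink L R (max_depth L R) \<noteq> {}"
proof -
  let ?A = "admissible_depths L R"
  have closed: "closed (shrink L R s)" for s
  proof -
    have "shrink L R s = (\<Inter>p\<in>facet_ineqs L R. {x. fst p \<bullet> x \<ge> snd p + s})"
      unfolding shrink_eq_facet_slacks[OF fin] by force
    then show ?thesis by (auto intro!: closed_INT closed_halfspace_ge)
  qed
  have "K \<inter> (\<Inter>s\<in>?A. shrink L R s) \<noteq> {}"
  proof (rule compact_imp_fip_image[OF K closed])
    fix B assume B: "finite B" "B \<subseteq> ?A"
    obtain m where m: "m \<in> ?A" "\<And>s. s \<in> B \<Longrightarrow> s \<le> m"
    proof (cases "B = {}")
      case True then show ?thesis using nonempty that by blast
    next
      case False
      then have "Max B \<in> B" using B(1) by simp
      then show ?thesis using that[of "Max B"] B by auto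
    qed
    then obtain x where "x \<in> shrink L R m" by (auto simp: admissible_depths_def)
    moreover have "shrink L R m \<subseteq> shrink L R s" if "s \<in> B" for s
      using m(2)[OF that] by (auto simp: shrink_def)
    ultimately show "K \<inter> (\<Inter>s\<in>B. shrink L R s) \<noteq> {}" using in_K[OF m(1)] by blast
  qed
  then obtain x where "\<And>s. s \<in> ?A \<Longrightarrow> s \<le> lattice_dist L R x" by (auto simp: shrink_def)
  then have "max_depth L R \<le> lattice_dist L R x"
    unfolding max_depth_def by (rule cSup_least[OF nonempty])
  then show ?thesis by (auto simp: shrink_def)
qed

lemma max_depth_pos:
  assumes "s \<in> admissible_depths L R" "bdd_above (admissible_depths L R)"
  shows "max_depth L R > 0"
  using cSup_upper[OF assms] assms(1) by (auto simp: max_depth_def admissible_depths_def)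

lemma continuous_on_Max_image:
  fixes g :: "'i \<Rightarrow> 'a::topological_space \<Rightarrow> 'b::linorder_topology"
  assumes "finite A" "A \<noteq> {}" "\<And>i. i \<in> A \<Longrightarrow> continuous_on S (g i)"
  shows "continuous_on S (\<lambda>x. Max ((\<lambda>i. g i x) ` A))"
  using assms
proof (induction A rule: finite_ne_induct)
  case (insert j A)
  have "continuous_on S (g j)" "continuous_on S (\<lambda>x. Max ((\<lambda>i. g i x) ` A))"
    using insert by auto
  then have "continuous_on S (\<lambda>x. max (g j x) (Max ((\<lambda>i. g i x) ` A)))"
    by (rule continuous_on_max)
  then show ?case using insert by simp
qed simp

text \<open>By compactness of the unit sphere some defining functional is uniformly negative on it.\<close>
lemma bounded_polyhedron_trivial_recession:
  fixes f :: "'i \<Rightarrow> 'a::euclidean_space"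
  assumes A: "finite A" and recession: "\<And>v. v \<noteq> 0 \<Longrightarrow> \<exists>i\<in>A. f i \<bullet> v < 0"
  shows "bounded {y. \<forall>i\<in>A. b i \<le> f i \<bullet> y}"
proof -
  obtain e :: 'a where "e \<in> Basis" using nonempty_Basis by blast
  then have "sphere 0 1 \<noteq> ({} :: 'a set)" "A \<noteq> {}"
    using recession[of e] by (auto simp: norm_Basis nonzero_Basis)
  define h where "h v = Max ((\<lambda>i. - (f i \<bullet> v)) ` A)" for v
  have "continuous_on (sphere 0 1) h"
    unfolding h_def by (rule continuous_on_Max_image[OF A \<open>A \<noteq> {}\<close>]) (intro continuous_intros)
  then obtain v0 where v0: "norm v0 = 1" and v0_min: "\<And>v. norm v = 1 \<Longrightarrow> h v0 \<le> h v"
    using continuous_attains_inf[OF compact_sphere \<open>sphere 0 1 \<noteq> {}\<close>, of h] by auto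
  have "v0 \<noteq> 0" using v0 by auto
  then obtain i0 where "i0 \<in> A" "f i0 \<bullet> v0 < 0" using recession by blast
  then have \<delta>: "h v0 > 0" using A \<open>A \<noteq> {}\<close> by (auto simp: h_def Max_gr_iff)
  define B where "B = Max ((\<lambda>i. - b i) ` A)"
  have "norm y \<le> max 0 (B / h v0)" if y: "\<forall>i\<in>A. b i \<le> f i \<bullet> y" for y
  proof (cases "y = 0")
    case False
    define v where "v = (1 / norm y) *\<^sub>R y"
    have "norm v = 1" using False by (simp add: v_def)
    have "h v \<in> (\<lambda>i. - (f i \<bullet> v)) ` A"
      unfolding h_def using A \<open>A \<noteq> {}\<close> by (intro Max_in) auto
    then obtain i where i: "i \<in> A" "h v = - (f i \<bullet> v)" by blast
    have "norm y * h v0 \<le> norm y * h v" using v0_min[OF \<open>norm v = 1\<close>] by (simp add: mult_left_mono)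
    also have "\<dots> = - (f i \<bullet> y)" using False i(2) by (simp add: v_def)
    also have "\<dots> \<le> - b i" using y i(1) by simp
    also have "\<dots> \<le> B" using A i(1) by (auto simp: B_def)
    finally have "norm y \<le> B / h v0" using \<delta> by (simp add: pos_le_divide_eq)
    then show ?thesis by simp
  qed simp
  then show ?thesis unfolding bounded_iff by blast
qed

section \<open>The core of a full-dimensional rational polytope\<close>

locale full_rational_polytope =
  fixes P :: "(real^'n) set"
  assumes rational: "rational_polytope int_lattice P" and full: "aff_dim P = int CARD('n)"
begin

abbreviation "P_ineqs \<equiv> facet_ineqs int_lattice P"
abbreviation "depth \<equiv> max_depth int_lattice P"
abbreviation "Core \<equiv> core int_lattice P"

lemma polytope_P: "polytope P"
  using rational_polytope_int_latticeE[OF rational] unfolding polytope_def by blast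

lemma compact_P: "compact P"
  by (rule polytope_imp_compact[OF polytope_P])

lemma finite_P_ineqs: "finite P_ineqs"
  by (rule finite_facet_ineqs[OF polytope_P _ span_int_lattice]) (simp add: full)

lemma P_ineqs_nonempty: "P_ineqs \<noteq> {}"
proof -
  obtain G where "G facet_of P" using polytope_facet_exists[OF polytope_P] full by auto
  then show ?thesis using facet_of_rational_polytope_facet_ineq[OF rational full] by blast
qed

lemma shrink_P: "shrink int_lattice P s = {x. \<forall>(a,b)\<in>P_ineqs. s \<le> a \<bullet> x - b}"
  by (rule shrink_eq_facet_slacks[OF finite_P_ineqs P_ineqs_nonempty])

lemma shrink_P_subset: "s > 0 \<Longrightarrow> shrink int_lattice P s \<subseteq> P"
  by (subst (2) rational_polytope_eq_facet_halfspaces[OF rational full]) (force simp: shrink_P)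

lemma admissible_depths_P_bdd: "bdd_above (admissible_depths int_lattice P)"
proof -
  obtain a0 b0 where ab0: "(a0, b0) \<in> P_ineqs" using P_ineqs_nonempty by auto
  obtain B where B: "\<And>x. x \<in> P \<Longrightarrow> norm x \<le> B"
    using compact_imp_bounded[OF compact_P] bounded_iff by metis
  show ?thesis
  proof
    fix s assume "s \<in> admissible_depths int_lattice P"
    then obtain x where "s > 0" "x \<in> shrink int_lattice P s" by (auto simp: admissible_depths_def)
    then have "x \<in> P" "s \<le> a0 \<bullet> x - b0" using shrink_P_subset ab0 by (auto simp: shrink_P)
    moreover have "a0 \<bullet> x \<le> norm a0 * B"
      using norm_cauchy_schwarz[of a0 x] mult_left_mono[OF B[OF \<open>x \<in> P\<close>], of "norm a0"] by simp
    ultimately show "s \<le> norm a0 * B - b0" by simp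
  qed
qed

lemma interior_P_nonempty: "interior P \<noteq> {}"
proof -
  have "affine hull P = UNIV" using full aff_dim_eq_full[of P] by simp
  moreover have "P \<noteq> {}" using full by (auto simp del: DIM_positive)
  ultimately show ?thesis
    using rel_interior_eq_empty[of P] polytope_imp_convex[OF polytope_P] rel_interior_interior by metis
qed

lemma depth_pos: "depth > 0"
proof -
  obtain y where "y \<in> interior P" using interior_P_nonempty by blast
  then have "lattice_dist int_lattice P y \<in> admissible_depths int_lattice P"
    by (rule lattice_dist_interior_admissible[OF finite_P_ineqs P_ineqs_nonempty])
  then show ?thesis by (rule max_depth_pos[OF _ admissible_depths_P_bdd])
qed

lemma Core_eq: "Core = {x. \<forall>(a,b)\<in>P_ineqs. depth \<le> a \<bullet> x - b}"
  by (simp add: core_eq_shrink_max_depth shrink_P)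

lemma Core_nonempty: "Core \<noteq> {}"
proof -
  obtain y where "y \<in> interior P" using interior_P_nonempty by blast
  then have "lattice_dist int_lattice P y \<in> admissible_depths int_lattice P"
    by (rule lattice_dist_interior_admissible[OF finite_P_ineqs P_ineqs_nonempty])
  then show ?thesis unfolding core_eq_shrink_max_depth
    by (intro shrink_max_depth_nonempty[OF finite_P_ineqs P_ineqs_nonempty compact_P _
          admissible_depths_P_bdd shrink_P_subset]) (auto simp: admissible_depths_def)
qed

lemma convex_Core: "convex Core"
proof -
  have "Core = (\<Inter>p\<in>P_ineqs. {x. fst p \<bullet> x \<ge> snd p + depth})" unfolding Core_eq by force
  then show ?thesis by (auto intro!: convex_INT convex_halfspace_ge)
qed

definition centre :: "real^'n" where "centre = (SOME c. c \<in> rel_interior Core)"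

definition tight :: "((real^'n) \<times> real) set" where
  "tight = {(a,b)\<in>P_ineqs. a \<bullet> centre - b = depth}"

lemma centre_rel_interior: "centre \<in> rel_interior Core"
  unfolding centre_def by (rule someI_ex) (use Core_nonempty convex_Core rel_interior_eq_empty in blast)

lemma centre_in_Core: "centre \<in> Core"
  using centre_rel_interior rel_interior_subset by blast

lemma tight_subset: "tight \<subseteq> P_ineqs"
  by (auto simp: tight_def)

text \<open>A tight slack is minimal at the relative interior point \<open>centre\<close>, so it is constant on \<open>Core\<close>:
  reflect \<open>x\<close> through \<open>centre\<close> inside the core.\<close>
lemma tight_slack_Core:
  assumes ab: "(a,b) \<in> tight" and x: "x \<in> Core"
  shows "a \<bullet> x - b = depth"
proof -
  have abP: "(a,b) \<in> P_ineqs" and ac: "a \<bullet> centre - b = depth" using ab by (auto simp: tight_def)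
  have ge: "depth \<le> a \<bullet> x - b" using x abP by (auto simp: Core_eq)
  obtain e where e: "e > 0" "cball centre e \<inter> affine hull Core \<subseteq> Core"
    using centre_rel_interior mem_rel_interior_cball by blast
  have "a \<bullet> x - b \<le> depth"
  proof (cases "x = centre")
    case False
    define t where "t = e / norm (x - centre)"
    have t: "t > 0" using e False by (simp add: t_def)
    define z where "z = (1 + t) *\<^sub>R centre + (- t) *\<^sub>R x"
    have "z \<in> affine hull Core"
      unfolding z_def by (rule mem_affine) (use centre_in_Core x in \<open>auto intro: hull_inc\<close>)
    moreover have "dist centre z = e"
    proof -
      have "centre - z = t *\<^sub>R (x - centre)" by (simp add: z_def algebra_simps)
      then show ?thesis using t False e(1) by (simp add: dist_norm t_def)
    qed
    ultimately have "z \<in> Core" using e by auto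
    then have "depth \<le> a \<bullet> z - b" using abP by (auto simp: Core_eq)
    also have "a \<bullet> z - b = (1 + t) * (a \<bullet> centre - b) - t * (a \<bullet> x - b)"
      by (simp add: z_def inner_add_right algebra_simps)
    finally have "t * (a \<bullet> x - b) \<le> t * depth" using ac by (simp add: algebra_simps)
    then show ?thesis using t by simp
  qed (use ac in simp)
  with ge show ?thesis by simp
qed

lemma tight_slack_affine_hull_Core:
  assumes ab: "(a,b) \<in> tight" and x: "x \<in> affine hull Core"
  shows "a \<bullet> x = b + depth"
proof -
  have "Core \<subseteq> {x. a \<bullet> x = b + depth}" using tight_slack_Core[OF ab] by force
  then have "affine hull Core \<subseteq> {x. a \<bullet> x = b + depth}"
    by (rule hull_minimal) (rule affine_hyperplane)
  then show ?thesis using x by blast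
qed

lemma tight_orthogonal_core_dir:
  assumes "(a,b) \<in> tight" "k \<in> core_dir P"
  shows "a \<bullet> k = 0"
proof -
  obtain x y where "k = x - y" "x \<in> affine hull Core" "y \<in> affine hull Core"
    using assms(2) by (auto simp: core_dir_def)
  then show ?thesis using tight_slack_affine_hull_Core[OF assms(1)] by (simp add: inner_diff_right)
qed

lemma non_tight_slack_near_centre:
  obtains \<epsilon> where "0 < \<epsilon>" "\<epsilon> \<le> 1"
    "\<And>a b. (a,b) \<in> P_ineqs - tight \<Longrightarrow> a \<bullet> (centre + \<epsilon> *\<^sub>R (x - centre)) - b > depth"
proof -
  define U where "U = (\<Inter>p\<in>P_ineqs - tight. {z. fst p \<bullet> z > snd p + depth})"
  have "open U" unfolding U_def using finite_P_ineqs by (auto intro!: open_INT open_halfspace_gt)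
  moreover have "centre \<in> U"
  proof -
    have "fst p \<bullet> centre > snd p + depth" if "p \<in> P_ineqs - tight" for p
    proof -
      have "depth \<le> fst p \<bullet> centre - snd p" using centre_in_Core that by (auto simp: Core_eq)
      moreover have "fst p \<bullet> centre - snd p \<noteq> depth" using that by (auto simp: tight_def)
      ultimately show ?thesis by simp
    qed
    then show ?thesis by (auto simp: U_def)
  qed
  moreover have "((\<lambda>\<epsilon>. centre + \<epsilon> *\<^sub>R (x - centre)) \<longlongrightarrow> centre) (at_right 0)"
    by (auto intro!: tendsto_eq_intros)
  ultimately have "\<forall>\<^sub>F \<epsilon> in at_right 0. centre + \<epsilon> *\<^sub>R (x - centre) \<in> U"
    using topological_tendstoD by blast
  moreover have "\<forall>\<^sub>F \<epsilon> in at_right (0::real). 0 < \<epsilon> \<and> \<epsilon> \<le> 1"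
    unfolding eventually_at_right_field by (auto intro!: exI[of _ 1])
  ultimately have "\<forall>\<^sub>F \<epsilon> in at_right 0. 0 < \<epsilon> \<and> \<epsilon> \<le> 1 \<and> centre + \<epsilon> *\<^sub>R (x - centre) \<in> U"
    by eventually_elim blast
  then obtain \<epsilon> where "0 < \<epsilon>" "\<epsilon> \<le> 1" "centre + \<epsilon> *\<^sub>R (x - centre) \<in> U"
    using eventually_happens'[OF trivial_limit_at_right_real] by blast
  with that show ?thesis unfolding U_def by force
qed

lemma tight_slack_segment:
  assumes "(a,b) \<in> tight"
  shows "a \<bullet> (centre + \<epsilon> *\<^sub>R (x - centre)) - b = (1 - \<epsilon>) * depth + \<epsilon> * (a \<bullet> x - b)"
  using assms by (simp add: tight_def inner_add_right inner_diff_right algebra_simps)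

text \<open>If \<open>x\<close> had slack \<open>> depth\<close> on all tight inequalities, a point between \<open>centre\<close> and \<open>x\<close>
  would have slack \<open>> depth\<close> on all inequalities, contradicting maximality of \<open>depth\<close>.\<close>
lemma tight_slack_le_depth:
  assumes "\<forall>(a,b)\<in>tight. s \<le> a \<bullet> x - b"
  shows "s \<le> depth"
proof (rule ccontr)
  assume "\<not> s \<le> depth"
  obtain \<epsilon> where \<epsilon>: "0 < \<epsilon>" "\<epsilon> \<le> 1"
    and non_tight: "\<And>a b. (a,b) \<in> P_ineqs - tight \<Longrightarrow> a \<bullet> (centre + \<epsilon> *\<^sub>R (x - centre)) - b > depth"
    using non_tight_slack_near_centre[of x] by blast
  define z where "z = centre + \<epsilon> *\<^sub>R (x - centre)"
  have slack: "a \<bullet> z - b > depth" if "(a,b) \<in> P_ineqs" for a b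
  proof (cases "(a,b) \<in> tight")
    case True
    have "depth < (1 - \<epsilon>) * depth + \<epsilon> * s" using \<epsilon> \<open>\<not> s \<le> depth\<close> by (simp add: algebra_simps)
    also have "\<dots> \<le> (1 - \<epsilon>) * depth + \<epsilon> * (a \<bullet> x - b)"
      using assms True \<epsilon> by (auto intro: mult_left_mono)
    finally show ?thesis using tight_slack_segment[OF True] by (simp add: z_def)
  qed (use non_tight that z_def in simp)
  have deeper: "lattice_dist int_lattice P z > depth"
    using slack finite_P_ineqs P_ineqs_nonempty by (auto simp: lattice_dist_def Min_gr_iff)
  then have "lattice_dist int_lattice P z \<in> admissible_depths int_lattice P"
    using depth_pos by (auto simp: admissible_depths_def shrink_def)
  with deeper show False
    using cSup_upper[OF _ admissible_depths_P_bdd] by (fastforce simp: max_depth_def)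
qed

lemma tight_slack_depth_affine_hull_Core:
  assumes "\<forall>(a,b)\<in>tight. depth \<le> a \<bullet> x - b"
  shows "x \<in> affine hull Core"
proof -
  obtain \<epsilon> where \<epsilon>: "0 < \<epsilon>" "\<epsilon> \<le> 1"
    and non_tight: "\<And>a b. (a,b) \<in> P_ineqs - tight \<Longrightarrow> a \<bullet> (centre + \<epsilon> *\<^sub>R (x - centre)) - b > depth"
    using non_tight_slack_near_centre[of x] by blast
  define z where "z = centre + \<epsilon> *\<^sub>R (x - centre)"
  have "depth \<le> a \<bullet> z - b" if "(a,b) \<in> P_ineqs" for a b
  proof (cases "(a,b) \<in> tight")
    case True
    have "depth = (1 - \<epsilon>) * depth + \<epsilon> * depth" by (simp add: algebra_simps)
    also have "\<dots> \<le> (1 - \<epsilon>) * depth + \<epsilon> * (a \<bullet> x - b)"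
      using assms True \<epsilon> by (auto intro: mult_left_mono)
    finally show ?thesis using tight_slack_segment[OF True] by (simp add: z_def)
  qed (use non_tight that z_def in force)
  then have "z \<in> Core" by (auto simp: Core_eq)
  have "x = (1 - 1/\<epsilon>) *\<^sub>R centre + (1/\<epsilon>) *\<^sub>R z"
    using \<epsilon> by (simp add: z_def algebra_simps)
  also have "\<dots> \<in> affine hull Core"
    by (rule mem_affine) (use centre_in_Core \<open>z \<in> Core\<close> in \<open>auto intro: hull_inc\<close>)
  finally show ?thesis .
qed

lemma tight_nonempty: "tight \<noteq> {}"
  using tight_slack_le_depth[of "depth + 1" centre] by auto

lemma centre_interior_P: "centre \<in> interior P"
proof -
  define V where "V = (\<Inter>p\<in>P_ineqs. {z. fst p \<bullet> z > snd p})"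
  have "open V" unfolding V_def using finite_P_ineqs by (auto intro!: open_INT open_halfspace_gt)
  moreover have "V \<subseteq> P"
    by (subst rational_polytope_eq_facet_halfspaces[OF rational full]) (force simp: V_def)
  moreover have "centre \<in> V" using centre_in_Core depth_pos by (force simp: V_def Core_eq)
  ultimately show ?thesis using interior_maximal by blast
qed

end

section \<open>Projecting along the core\<close>

lemma rational_polytope_linear_image:
  assumes "linear f" "rational_polytope L R"
  shows "rational_polytope (f ` L) (f ` R)"
proof -
  obtain S where S: "finite S" "R = convex hull S"
    and mult: "\<And>v. v \<in> S \<Longrightarrow> \<exists>k::nat. k > 0 \<and> real k *\<^sub>R v \<in> L"
    using assms(2) unfolding rational_polytope_def by blast
  have "\<exists>k::nat. k > 0 \<and> real k *\<^sub>R f v \<in> f ` L" if "v \<in> S" for v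
    using mult[OF that] linear_scale[OF assms(1)] by (metis image_eqI)
  moreover have "f ` R = convex hull (f ` S)"
    using S(2) convex_hull_linear_image[OF assms(1)] by simp
  ultimately show ?thesis unfolding rational_polytope_def using S(1) by blast
qed

lemma aff_dim_surjective_linear_image:
  fixes f :: "'a::euclidean_space \<Rightarrow> 'b::euclidean_space"
  assumes "linear f" "surj f" "aff_dim R = int DIM('a)"
  shows "aff_dim (f ` R) = int DIM('b)"
proof -
  have "affine hull R = UNIV" using assms(3) aff_dim_eq_full by blast
  then have "affine hull (f ` R) = UNIV"
    using affine_hull_linear_image[of f R] assms(1,2) linear_conv_bounded_linear by auto
  then show ?thesis using aff_dim_eq_full by blast
qed

lemma primitive_in_dual_linear_image:
  fixes f :: "'a::euclidean_space \<Rightarrow> 'b::euclidean_space"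
  assumes lin: "linear f" and factor: "\<And>x. a' \<bullet> f x = a \<bullet> x"
    and prim: "primitive_in (dual_lattice L) a"
  shows "primitive_in (dual_lattice (f ` L)) a'"
  unfolding primitive_in_def
proof (intro conjI ballI allI impI)
  show "a' \<in> dual_lattice (f ` L)"
    using prim by (auto simp: primitive_in_def dual_lattice_def factor)
  show "a' \<noteq> 0" using prim factor[of a] by (auto simp: primitive_in_def)
  fix b' k assume b': "b' \<in> dual_lattice (f ` L)" and k: "a' = of_int (k::int) *\<^sub>R b'"
  define b where "b = adjoint f b'"
  have b: "b \<bullet> x = b' \<bullet> f x" for x
    using adjoint_works[OF lin, of x b'] by (simp add: b_def inner_commute)
  have "b \<in> dual_lattice L" using b' by (auto simp: dual_lattice_def b)
  moreover have "(a - of_int k *\<^sub>R b) \<bullet> x = 0" for x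
    using factor[of x] k b[of x] by (simp add: inner_diff_left)
  then have "a = of_int k *\<^sub>R b" by (metis inner_eq_zero_iff right_minus_eq)
  ultimately show "\<bar>k\<bar> = 1" using prim unfolding primitive_in_def by blast
qed

lemma is_facet_linear_image:
  fixes f :: "'a::euclidean_space \<Rightarrow> 'b::euclidean_space"
  assumes lin: "linear f" and surj: "surj f" and full: "aff_dim R = int DIM('a)" and "convex R"
    and factor: "\<And>x. a' \<bullet> f x = a \<bullet> x" and "a \<noteq> 0"
    and valid: "\<forall>x\<in>R. a \<bullet> x \<ge> b" and facet: "is_facet {x\<in>R. a \<bullet> x = b} R"
  shows "is_facet {y\<in>f ` R. a' \<bullet> y = b} (f ` R)"
proof -
  let ?G = "{x\<in>R. a \<bullet> x = b}"
  have a': "a' \<noteq> 0" using factor[of a] \<open>a \<noteq> 0\<close> by auto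
  have image: "{y\<in>f ` R. a' \<bullet> y = b} = f ` ?G" by (auto simp: factor)
  have "(f ` R \<inter> {y. a' \<bullet> y = b}) face_of f ` R"
    by (rule face_of_Int_supporting_hyperplane_ge[OF convex_linear_image[OF lin \<open>convex R\<close>]])
      (use valid in \<open>auto simp: factor\<close>)
  moreover have "f ` R \<inter> {y. a' \<bullet> y = b} = f ` ?G" using image by blast
  ultimately have face: "f ` ?G face_of f ` R" by simp
  have "affine hull ?G = {x. a \<bullet> x = b}"
    using facet full by (intro affine_hull_eq_hyperplane[OF \<open>a \<noteq> 0\<close>]) (auto simp: is_facet_def)
  then have "affine hull (f ` ?G) = f ` {x. a \<bullet> x = b}"
    using affine_hull_linear_image[of f ?G] lin linear_conv_bounded_linear by auto
  also have "\<dots> = {y. a' \<bullet> y = b}"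
  proof (intro equalityI subsetI)
    fix y assume "y \<in> {y. a' \<bullet> y = b}"
    moreover obtain x where "y = f x" using surj by (metis surjD)
    ultimately show "y \<in> f ` {x. a \<bullet> x = b}" by (simp add: factor)
  qed (auto simp: factor)
  finally have "aff_dim (affine hull (f ` ?G)) = int DIM('b) - 1"
    using aff_dim_hyperplane[OF a'] by simp
  then have "aff_dim (f ` ?G) = int DIM('b) - 1" by simp
  then show ?thesis
    using face aff_dim_surjective_linear_image[OF lin surj full] by (simp add: is_facet_def image)
qed

locale core_projection = full_rational_polytope P for P :: "(real^'n) set" +
  fixes \<pi> :: "real^'n \<Rightarrow> 'm::euclidean_space"
  assumes linear: "linear \<pi>" and surj: "surj \<pi>" and kernel: "{x. \<pi> x = 0} = core_dir P"
begin

abbreviation "Q \<equiv> \<pi> ` P"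
abbreviation "M \<equiv> \<pi> ` int_lattice"
abbreviation "Q_ineqs \<equiv> facet_ineqs M Q"

definition lift :: "'m \<Rightarrow> real^'n" where "lift = (SOME g. linear g \<and> \<pi> \<circ> g = id)"

lemma linear_lift: "linear lift" and \<pi>_lift [simp]: "\<pi> (lift y) = y"
proof -
  have "\<exists>g. linear g \<and> \<pi> \<circ> g = id" by (rule linear_surjective_right_inverse[OF linear surj])
  then have "linear lift \<and> \<pi> \<circ> lift = id" unfolding lift_def by (rule someI_ex)
  then show "linear lift" "\<pi> (lift y) = y" by (auto simp: fun_eq_iff)
qed

lemma \<pi>_eq_iff: "\<pi> x = \<pi> y \<longleftrightarrow> x - y \<in> core_dir P"
proof -
  have "\<pi> x = \<pi> y \<longleftrightarrow> \<pi> (x - y) = 0" by (simp add: linear_diff[OF linear])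
  also have "\<dots> \<longleftrightarrow> x - y \<in> core_dir P" using kernel by blast
  finally show ?thesis .
qed

lemma \<pi>_affine_hull_Core: "x \<in> affine hull Core \<Longrightarrow> y \<in> affine hull Core \<Longrightarrow> \<pi> x = \<pi> y"
  by (auto simp: \<pi>_eq_iff core_dir_def)

definition descend :: "real^'n \<Rightarrow> 'm" where "descend a = adjoint lift a"

text \<open>Tight functionals vanish on \<open>K(P)\<close>, the kernel of \<open>\<pi>\<close>, so they factor through \<open>\<pi>\<close>.\<close>
lemma descend_inner: "(a,b) \<in> tight \<Longrightarrow> descend a \<bullet> \<pi> x = a \<bullet> x"
proof -
  assume ab: "(a,b) \<in> tight"
  have "descend a \<bullet> \<pi> x = lift (\<pi> x) \<bullet> a"
    by (simp add: descend_def inner_commute adjoint_works[OF linear_lift])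
  moreover have "a \<bullet> (lift (\<pi> x) - x) = 0"
    by (rule tight_orthogonal_core_dir[OF ab]) (simp add: \<pi>_eq_iff[symmetric])
  ultimately show ?thesis by (simp add: inner_diff_right inner_commute)
qed

lemma aff_dim_Q: "aff_dim Q = int DIM('m)"
  using aff_dim_surjective_linear_image[OF linear surj] full by simp

lemma polytope_Q: "polytope Q"
  using rational_polytope_int_latticeE[OF rational] convex_hull_linear_image[OF linear]
  unfolding polytope_def by (metis finite_imageI)

lemma span_M: "span M = UNIV"
  using linear_span_image[OF linear] span_int_lattice surj by metis

lemma finite_Q_ineqs: "finite Q_ineqs"
  by (rule finite_facet_ineqs[OF polytope_Q aff_dim_Q span_M])

lemma descend_Q_ineq: "(a,b) \<in> tight \<Longrightarrow> (descend a, b) \<in> Q_ineqs"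
proof -
  assume ab: "(a,b) \<in> tight"
  then have prim: "primitive_in (dual_lattice int_lattice) a" and valid: "\<forall>x\<in>P. a \<bullet> x \<ge> b"
    and facet: "is_facet {x\<in>P. a \<bullet> x = b} P"
    using tight_subset by (auto simp: facet_ineqs_def)
  have "primitive_in (dual_lattice M) (descend a)"
    by (rule primitive_in_dual_linear_image[OF linear descend_inner[OF ab] prim])
  moreover have "is_facet {y\<in>Q. descend a \<bullet> y = b} Q"
    using prim full valid facet polytope_imp_convex[OF polytope_P]
    by (intro is_facet_linear_image[OF linear surj _ _ descend_inner[OF ab]])
      (auto simp: primitive_in_def)
  moreover have "\<forall>y\<in>Q. descend a \<bullet> y \<ge> b" using valid by (auto simp: descend_inner[OF ab])
  ultimately show ?thesis by (simp add: facet_ineqs_def)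
qed

lemma Q_ineqs_nonempty: "Q_ineqs \<noteq> {}"
  using tight_nonempty descend_Q_ineq by fastforce

lemma tight_slack_lift:
  assumes "y \<in> shrink M Q s" "(a,b) \<in> tight"
  shows "s \<le> a \<bullet> lift y - b"
  using assms descend_Q_ineq[OF assms(2)] descend_inner[OF assms(2), of "lift y"]
  by (force simp: shrink_eq_facet_slacks[OF finite_Q_ineqs Q_ineqs_nonempty])

lemma admissible_depths_Q_le: "s \<in> admissible_depths M Q \<Longrightarrow> s \<le> depth"
  using tight_slack_le_depth tight_slack_lift by (fastforce simp: admissible_depths_def)

lemma admissible_depths_Q_bdd: "bdd_above (admissible_depths M Q)"
  unfolding bdd_above_def using admissible_depths_Q_le by blast

lemma \<pi>_centre_interior_Q: "\<pi> centre \<in> interior Q"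
proof -
  have "open (\<pi> ` interior P)" by (rule open_surjective_linear_image[OF open_interior linear surj])
  moreover have "\<pi> ` interior P \<subseteq> Q" using interior_subset by blast
  ultimately have "\<pi> ` interior P \<subseteq> interior Q" by (simp add: interior_maximal)
  then show ?thesis using centre_interior_P by blast
qed

lemma lattice_dist_\<pi>_centre_admissible: "lattice_dist M Q (\<pi> centre) \<in> admissible_depths M Q"
  by (rule lattice_dist_interior_admissible[OF finite_Q_ineqs Q_ineqs_nonempty \<pi>_centre_interior_Q])

lemma max_depth_Q_pos: "max_depth M Q > 0"
  by (rule max_depth_pos[OF lattice_dist_\<pi>_centre_admissible admissible_depths_Q_bdd])

lemma max_depth_Q_le: "max_depth M Q \<le> depth"
  unfolding max_depth_def[of M Q]
  by (rule cSup_least) (use lattice_dist_\<pi>_centre_admissible admissible_depths_Q_le in auto)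

text \<open>The recession cone of the tight inequalities in the quotient is trivial: a recession
  direction lifts into \<open>K(P)\<close>, the kernel of \<open>\<pi>\<close>.\<close>
lemma bounded_tight_region: "bounded {y. \<forall>(a,b)\<in>tight. b \<le> descend a \<bullet> y}"
proof -
  have "\<exists>p\<in>tight. descend (fst p) \<bullet> v < 0" if "v \<noteq> 0" for v
  proof (rule ccontr)
    assume "\<not> ?thesis"
    then have "depth \<le> a \<bullet> (centre + lift v) - b" if "(a,b) \<in> tight" for a b
      using that descend_inner[OF that, of "lift v"]
      by (force simp: tight_def inner_add_right)
    then have "centre + lift v \<in> affine hull Core" by (blast intro: tight_slack_depth_affine_hull_Core)
    then have "\<pi> (centre + lift v) = \<pi> centre"
      using \<pi>_affine_hull_Core hull_inc[OF centre_in_Core] by blast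
    then show False using \<open>v \<noteq> 0\<close> linear_add[OF linear] by simp
  qed
  then show ?thesis
    using bounded_polyhedron_trivial_recession[of tight "\<lambda>p. descend (fst p)" snd]
      finite_subset[OF tight_subset finite_P_ineqs] by (simp add: case_prod_beta)
qed

lemma shrink_Q_max_depth_nonempty: "shrink M Q (max_depth M Q) \<noteq> {}"
proof (rule shrink_max_depth_nonempty[OF finite_Q_ineqs Q_ineqs_nonempty])
  let ?K = "{y. \<forall>(a,b)\<in>tight. b \<le> descend a \<bullet> y}"
  have "?K = (\<Inter>p\<in>tight. {y. descend (fst p) \<bullet> y \<ge> snd p})" by (force simp: case_prod_beta)
  then have "closed ?K" by (auto intro!: closed_INT closed_halfspace_ge)
  then show "compact ?K" using bounded_tight_region by (simp add: compact_eq_bounded_closed)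
  show "admissible_depths M Q \<noteq> {}" using lattice_dist_\<pi>_centre_admissible by blast
  show "bdd_above (admissible_depths M Q)" by (rule admissible_depths_Q_bdd)
  fix s assume "s \<in> admissible_depths M Q"
  then show "shrink M Q s \<subseteq> ?K"
    using descend_Q_ineq by (force simp: admissible_depths_def shrink_eq_facet_slacks[OF finite_Q_ineqs Q_ineqs_nonempty])
qed

lemma shrink_Q_depth_subset: "shrink M Q depth \<subseteq> {\<pi> centre}"
proof
  fix y assume "y \<in> shrink M Q depth"
  then have "lift y \<in> affine hull Core"
    using tight_slack_lift by (blast intro: tight_slack_depth_affine_hull_Core)
  then show "y \<in> {\<pi> centre}"
    using \<pi>_affine_hull_Core hull_inc[OF centre_in_Core] by force
qed

lemma image_Core: "\<pi> ` Core = {\<pi> centre}"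
proof -
  have "\<pi> ` Core = (\<lambda>_. \<pi> centre) ` Core"
    by (rule image_cong[OF refl], rule \<pi>_affine_hull_Core[OF hull_inc hull_inc[OF centre_in_Core]])
  then show ?thesis using image_constant[OF centre_in_Core] by simp
qed

end

theorem proposition2p3:
  fixes P :: "(real^'n) set" and \<pi> :: "real^'n \<Rightarrow> 'm::euclidean_space"
  assumes "rational_polytope int_lattice P"
    and "aff_dim P = int CARD('n)"
    and "linear \<pi>" and "surj \<pi>"
    and "{x. \<pi> x = 0} = core_dir P"
  shows "rational_polytope (\<pi> ` int_lattice) (\<pi> ` P)
    \<and> qcodegree (\<pi> ` int_lattice) (\<pi> ` P) \<ge> qcodegree int_lattice P
    \<and> (qcodegree (\<pi> ` int_lattice) (\<pi> ` P) = qcodegree int_lattice P \<longrightarrow>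
        (\<exists>q. \<pi> ` core int_lattice P = {q} \<and> core (\<pi> ` int_lattice) (\<pi> ` P) = {q}))"
proof -
  interpret core_projection P \<pi>
    by (intro core_projection.intro full_rational_polytope.intro core_projection_axioms.intro)
      (fact assms)+
  show ?thesis
  proof (intro conjI impI)
    show "rational_polytope M Q" by (rule rational_polytope_linear_image[OF assms(3,1)])
    show "qcodegree M Q \<ge> qcodegree int_lattice P"
      using max_depth_Q_pos max_depth_Q_le by (simp add: qcodegree_eq_inverse_max_depth le_imp_inverse_le)
    assume "qcodegree M Q = qcodegree int_lattice P"
    then have "max_depth M Q = depth" by (simp add: qcodegree_eq_inverse_max_depth)
    then have "core M Q = {\<pi> centre}"
      using shrink_Q_max_depth_nonempty shrink_Q_depth_subset by (auto simp: core_eq_shrink_max_depth)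
    with image_Core show "\<exists>q. \<pi> ` Core = {q} \<and> core M Q = {q}" by blast
  qed
qed

end
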